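(* Let $\mathcal V$ be a variety of $\tau$-algebras axiomatised by the equational theory $T$, and let $\mathbf{Cl}(\mathcal V)$ be the clone $\mathcal V$-algebra. Then: (1) $\mathbf{Cl}(\mathcal V)$ is a finite dimensional clone $\tau$-algebra; (2) the congruence lattice $\mathrm{Con}\,\mathbf{Cl}(\mathcal V)$ is isomorphic to the lattice $L(T)$ of all equational theories (of type $\tau$) containing $T$; (3) if $w\in F_{\mathcal V}$ has dimension $n>0$ in $\mathbf{Cl}(\mathcal V)$, then there is a $\tau$-term $t$ whose variables are among $v_1,\dots,v_n$ with $t\in w$; (4) if $w\in F_{\mathcal V}$ has dimension $0$ in $\mathbf{Cl}(\mathcal V)$, then there is a $\tau$-term $t(v_1)$ (with variables among $v_1$) with $t(v_1)\in w$ and $\mathcal V\models t(v_1)=t(v_2)$; (5) $\mathbf{Cl}(\mathcal V)$ is isomorphic to the block algebra $(\mathrm{Clo}\,\mathbf F_{\mathcal V})^\top$.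
   Context: $\mathbf F_{\mathcal V}$ is the free algebra of $\mathcal V$ over the countable set $I=\{v_1,v_2,\dots\}$ of generators; its elements are equivalence classes of $\tau$-terms in the variables $v_i$ modulo $\mathcal V$-equality. The clone $\mathcal V$-algebra is $\mathbf{Cl}(\mathcal V)=(\mathbf F_{\mathcal V},q_n^{\mathbf F}\ (n\ge0),\mathsf e_i^{\mathbf F}\ (i\ge1))$ with $\mathsf e_i^{\mathbf F}=v_i$ and $q_n^{\mathbf F}(a,b_1,\dots,b_n)=s(a)$, where $s$ is the unique endomorphism of $\mathbf F_{\mathcal V}$ with $s(v_i)=b_i$ ($i\le n$) and $s(v_i)=v_i$ ($i>n$). A clone $\tau$-algebra is an algebra $(C,\sigma\ (\sigma\in\tau),q_n,\mathsf e_i)$, $\mathsf e_i$ nullary and $q_n$ of arity $n+1$, satisfying: (C1) $q_n(\mathsf e_i,x_1,\dots,x_n)=x_i$ ($i\le n$); (C2) $q_n(\mathsf e_j,x_1,\dots,x_n)=\mathsf e_j$ ($j>n$); (C3) $q_n(x,\mathsf e_1,\dots,\mathsf e_n)=x$; (C4) $q_k(x,y_1,\dots,y_k)=q_n(x,y_1,\dots,y_k,\mathsf e_{k+1},\dots,\mathsf e_n)$ ($n>k$); (C5) $q_n(q_n(x,\mathbf y),\mathbf z)=q_n(x,q_n(y_1,\mathbf z),\dots,q_n(y_n,\mathbf z))$; (C6) $q_n(\sigma(x_1,\dots,x_k),\mathbf y)=\sigma(q_n(x_1,\mathbf y),\dots,q_n(x_k,\mathbf y))$. An element $a$ is independent of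 $\mathsf e_n$ if $q_n(a,\mathsf e_1,\dots,\mathsf e_{n-1},\mathsf e_{n+1})=a$; its dimension is $0$ if it depends on no $\mathsf e_n$, otherwise the largest $n$ it depends on (infinite if infinitely many); finite dimensional means all elements have finite dimension. $\mathrm{Clo}\,\mathbf F_{\mathcal V}$ is the clone of term operations of $\mathbf F_{\mathcal V}$ (all operations $\mathbf a\mapsto t(\mathbf a)$ for $\tau$-terms $t$ in at most $k$ variables, on $F^k$, together with their restrictions obtained by dropping fictitious last arguments, including nullary ones). With $\omega=\{1,2,\dots\}$, the top extension of $f:A^n\to A$ is $f^\top(s)=f(s_1,\dots,s_n)$ for $s\in A^\omega$; $(\mathrm{Clo}\,\mathbf F_{\mathcal V})^\top=\{f^\top: f\in\mathrm{Clo}\,\mathbf F_{\mathcal V}\}$ viewed as a subalgebra of the full functional clone $\tau$-algebra with value domain $\mathbf F_{\mathcal V}$, whose universe is all maps $F_{\mathcal V}^\omega\to F_{\mathcal V}$, with $\mathsf e_i(s)=s_i$, $q_n(\varphi,\psi_1,\dots,\psi_n)(s)=\varphi(s[\psi_1(s),\dots,\psi_n(s)])$ ($s[b_1,\dots,b_n]$ replacing the first $n$ entries), $\sigma(\psi_1,\dots,\psi_k)(s)=\sigma^{\mathbf F}(\psi_1(s),\dots,\psi_k(s))$. *)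

theory Defs
  imports "HOL-Library.FuncSet"
begin

text \<open>Operation symbols have type 'f, with arity function ar.  Variable v_i is Var i,
  for i >= 1 (the index 0 is not a generator and does not occur in well-formed terms).\<close>

datatype 'f trm = Var nat | Fn 'f "'f trm list"

fun vars :: "'f trm \<Rightarrow> nat set" where
  "vars (Var i) = {i}"
| "vars (Fn f ts) = \<Union> (set (map vars ts))"

fun wf_trm :: "('f \<Rightarrow> nat) \<Rightarrow> 'f trm \<Rightarrow> bool" where
  "wf_trm ar (Var i) = (1 \<le> i)"
| "wf_trm ar (Fn f ts) = (length ts = ar f \<and> (\<forall>t\<in>set ts. wf_trm ar t))"

fun subst :: "(nat \<Rightarrow> 'f trm) \<Rightarrow> 'f trm \<Rightarrow> 'f trm" where
  "subst \<theta> (Var i) = \<theta> i"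
| "subst \<theta> (Fn f ts) = Fn f (map (subst \<theta>) ts)"

definition wf_terms :: "('f \<Rightarrow> nat) \<Rightarrow> 'f trm set" where
  "wf_terms ar = {t. wf_trm ar t}"

definition eq_theory :: "('f \<Rightarrow> nat) \<Rightarrow> ('f trm \<times> 'f trm) set \<Rightarrow> bool" where
  "eq_theory ar T \<longleftrightarrow>
     T \<subseteq> wf_terms ar \<times> wf_terms ar \<and>
     (\<forall>t\<in>wf_terms ar. (t, t) \<in> T) \<and>
     (\<forall>s t. (s, t) \<in> T \<longrightarrow> (t, s) \<in> T) \<and>
     (\<forall>s t u. (s, t) \<in> T \<longrightarrow> (t, u) \<in> T \<longrightarrow> (s, u) \<in> T) \<and>
     (\<forall>f ts us. length ts = ar f \<longrightarrow> list_all2 (\<lambda>t u. (t, u) \<in> T) ts us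
         \<longrightarrow> (Fn f ts, Fn f us) \<in> T) \<and>
     (\<forall>s t \<theta>. (s, t) \<in> T \<longrightarrow> (\<forall>i\<ge>1. wf_trm ar (\<theta> i))
         \<longrightarrow> (subst \<theta> s, subst \<theta> t) \<in> T)"

definition LT :: "('f \<Rightarrow> nat) \<Rightarrow> ('f trm \<times> 'f trm) set \<Rightarrow> ('f trm \<times> 'f trm) set set" where
  "LT ar T = {T'. eq_theory ar T' \<and> T \<subseteq> T'}"

text \<open>V |= s = t iff (s,t) \<in> T; F_V consists of the T-classes of well-formed terms.\<close>

definition FV :: "('f \<Rightarrow> nat) \<Rightarrow> ('f trm \<times> 'f trm) set \<Rightarrow> 'f trm set set" where
  "FV ar T = wf_terms ar // T"

definition rep :: "'f trm set \<Rightarrow> 'f trm" where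
  "rep w = (SOME t. t \<in> w)"

definition FV_op :: "('f trm \<times> 'f trm) set \<Rightarrow> 'f \<Rightarrow> 'f trm set list \<Rightarrow> 'f trm set" where
  "FV_op T f ws = T `` {Fn f (map rep ws)}"

definition FV_var :: "('f trm \<times> 'f trm) set \<Rightarrow> nat \<Rightarrow> 'f trm set" where
  "FV_var T i = T `` {Var i}"

definition FV_endo :: "('f \<Rightarrow> nat) \<Rightarrow> ('f trm \<times> 'f trm) set \<Rightarrow> ('f trm set \<Rightarrow> 'f trm set) \<Rightarrow> bool" where
  "FV_endo ar T s \<longleftrightarrow> s \<in> FV ar T \<rightarrow>\<^sub>E FV ar T \<and>
     (\<forall>f ws. set ws \<subseteq> FV ar T \<longrightarrow> length ws = ar f \<longrightarrow>
        s (FV_op T f ws) = FV_op T f (map s ws))"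

definition FV_q :: "('f \<Rightarrow> nat) \<Rightarrow> ('f trm \<times> 'f trm) set \<Rightarrow> nat \<Rightarrow> 'f trm set \<Rightarrow> 'f trm set list \<Rightarrow> 'f trm set" where
  "FV_q ar T n a bs = (THE s. FV_endo ar T s \<and>
       (\<forall>i. 1 \<le> i \<longrightarrow> i \<le> n \<longrightarrow> s (FV_var T i) = bs ! (i - 1)) \<and>
       (\<forall>i. n < i \<longrightarrow> s (FV_var T i) = FV_var T i)) a"

record ('f, 'a) clone_alg =
  carrier :: "'a set"
  ops :: "'f \<Rightarrow> 'a list \<Rightarrow> 'a"
  qop :: "nat \<Rightarrow> 'a \<Rightarrow> 'a list \<Rightarrow> 'a"
  eop :: "nat \<Rightarrow> 'a"

definition clone_algebra :: "('f \<Rightarrow> nat) \<Rightarrow> ('f, 'a, 'b) clone_alg_scheme \<Rightarrow> bool" where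
  "clone_algebra ar A \<longleftrightarrow>
    (let C = carrier A; q = qop A; e = eop A; \<sigma> = ops A in
     (\<forall>i\<ge>1. e i \<in> C) \<and>
     (\<forall>f xs. set xs \<subseteq> C \<longrightarrow> length xs = ar f \<longrightarrow> \<sigma> f xs \<in> C) \<and>
     (\<forall>n x ys. x \<in> C \<longrightarrow> set ys \<subseteq> C \<longrightarrow> length ys = n \<longrightarrow> q n x ys \<in> C) \<and>
     \<comment> \<open>(C1)\<close>
     (\<forall>n i xs. 1 \<le> i \<longrightarrow> i \<le> n \<longrightarrow> set xs \<subseteq> C \<longrightarrow> length xs = n \<longrightarrow> q n (e i) xs = xs ! (i - 1)) \<and>
     \<comment> \<open>(C2)\<close>
     (\<forall>n j xs. n < j \<longrightarrow> set xs \<subseteq> C \<longrightarrow> length xs = n \<longrightarrow> q n (e j) xs = e j) \<and>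
     \<comment> \<open>(C3)\<close>
     (\<forall>n x. x \<in> C \<longrightarrow> q n x (map e [1..<n+1]) = x) \<and>
     \<comment> \<open>(C4)\<close>
     (\<forall>n k x ys. k < n \<longrightarrow> x \<in> C \<longrightarrow> set ys \<subseteq> C \<longrightarrow> length ys = k \<longrightarrow>
         q k x ys = q n x (ys @ map e [k+1..<n+1])) \<and>
     \<comment> \<open>(C5)\<close>
     (\<forall>n x ys zs. x \<in> C \<longrightarrow> set ys \<subseteq> C \<longrightarrow> set zs \<subseteq> C \<longrightarrow> length ys = n \<longrightarrow> length zs = n \<longrightarrow>
         q n (q n x ys) zs = q n x (map (\<lambda>y. q n y zs) ys)) \<and>
     \<comment> \<open>(C6)\<close>
     (\<forall>n f xs ys. set xs \<subseteq> C \<longrightarrow> length xs = ar f \<longrightarrow> set ys \<subseteq> C \<longrightarrow> length ys = n \<longrightarrow>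
         q n (\<sigma> f xs) ys = \<sigma> f (map (\<lambda>x. q n x ys) xs)))"

definition indep :: "('f, 'a, 'b) clone_alg_scheme \<Rightarrow> 'a \<Rightarrow> nat \<Rightarrow> bool" where
  "indep A a n \<longleftrightarrow> qop A n a (map (eop A) ([1..<n] @ [n+1])) = a"

definition finite_dimensional :: "('f, 'a, 'b) clone_alg_scheme \<Rightarrow> bool" where
  "finite_dimensional A \<longleftrightarrow> (\<forall>a\<in>carrier A. finite {n. 1 \<le> n \<and> \<not> indep A a n})"

definition has_dim :: "('f, 'a, 'b) clone_alg_scheme \<Rightarrow> 'a \<Rightarrow> nat \<Rightarrow> bool" where
  "has_dim A a d \<longleftrightarrow>
     (d = 0 \<and> (\<forall>n\<ge>1. indep A a n)) \<or>
     (d > 0 \<and> \<not> indep A a d \<and> (\<forall>n>d. indep A a n))"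

definition Con :: "('f \<Rightarrow> nat) \<Rightarrow> ('f, 'a, 'b) clone_alg_scheme \<Rightarrow> ('a \<times> 'a) set set" where
  "Con ar A = {\<theta>. equiv (carrier A) \<theta> \<and>
     (\<forall>f xs ys. length xs = ar f \<longrightarrow> list_all2 (\<lambda>x y. (x, y) \<in> \<theta>) xs ys
        \<longrightarrow> (ops A f xs, ops A f ys) \<in> \<theta>) \<and>
     (\<forall>n x y xs ys. length xs = n \<longrightarrow> (x, y) \<in> \<theta> \<longrightarrow> list_all2 (\<lambda>x y. (x, y) \<in> \<theta>) xs ys
        \<longrightarrow> (qop A n x xs, qop A n y ys) \<in> \<theta>)}"

definition clone_iso :: "('f \<Rightarrow> nat) \<Rightarrow> ('f, 'a, 'b) clone_alg_scheme \<Rightarrow> ('f, 'c, 'd) clone_alg_scheme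
    \<Rightarrow> ('a \<Rightarrow> 'c) \<Rightarrow> bool" where
  "clone_iso ar A B h \<longleftrightarrow>
     bij_betw h (carrier A) (carrier B) \<and>
     (\<forall>f xs. set xs \<subseteq> carrier A \<longrightarrow> length xs = ar f \<longrightarrow> h (ops A f xs) = ops B f (map h xs)) \<and>
     (\<forall>n x ys. x \<in> carrier A \<longrightarrow> set ys \<subseteq> carrier A \<longrightarrow> length ys = n \<longrightarrow>
        h (qop A n x ys) = qop B n (h x) (map h ys)) \<and>
     (\<forall>i\<ge>1. h (eop A i) = eop B i)"

definition ClV :: "('f \<Rightarrow> nat) \<Rightarrow> ('f trm \<times> 'f trm) set \<Rightarrow> ('f, 'f trm set) clone_alg" where
  "ClV ar T = \<lparr> carrier = FV ar T, ops = FV_op T, qop = FV_q ar T, eop = FV_var T \<rparr>"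

fun term_op :: "('f trm \<times> 'f trm) set \<Rightarrow> 'f trm \<Rightarrow> 'f trm set list \<Rightarrow> 'f trm set" where
  "term_op T (Var i) xs = xs ! (i - 1)"
| "term_op T (Fn f ts) xs = FV_op T f (map (\<lambda>t. term_op T t xs) ts)"

definition term_ops :: "('f \<Rightarrow> nat) \<Rightarrow> ('f trm \<times> 'f trm) set \<Rightarrow> (nat \<times> ('f trm set list \<Rightarrow> 'f trm set)) set" where
  "term_ops ar T = {(k, term_op T t) | k t. wf_trm ar t \<and> vars t \<subseteq> {1..k}}"

text \<open>Clo F_V: term operations (arity k, function on F^k) together with their restrictions
  obtained by dropping fictitious last arguments.\<close>
definition Clo :: "('f \<Rightarrow> nat) \<Rightarrow> ('f trm \<times> 'f trm) set \<Rightarrow> (nat \<times> ('f trm set list \<Rightarrow> 'f trm set)) set" where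
  "Clo ar T = {(m, \<lambda>xs. g (xs @ ys)) | m k g ys.
      (k, g) \<in> term_ops ar T \<and> m \<le> k \<and> set ys \<subseteq> FV ar T \<and> length ys = k - m \<and>
      (\<forall>xs zs zs'. set xs \<subseteq> FV ar T \<longrightarrow> length xs = m \<longrightarrow>
          set zs \<subseteq> FV ar T \<longrightarrow> length zs = k - m \<longrightarrow>
          set zs' \<subseteq> FV ar T \<longrightarrow> length zs' = k - m \<longrightarrow> g (xs @ zs) = g (xs @ zs'))}"

text \<open>F^omega, omega = {1,2,...}: sequences indexed by positive naturals
  (position 0 fixed to undefined).\<close>
definition Omega :: "('f \<Rightarrow> nat) \<Rightarrow> ('f trm \<times> 'f trm) set \<Rightarrow> (nat \<Rightarrow> 'f trm set) set" where
  "Omega ar T = {s. s 0 = undefined \<and> (\<forall>i\<ge>1. s i \<in> FV ar T)}"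

definition top_ext :: "('f \<Rightarrow> nat) \<Rightarrow> ('f trm \<times> 'f trm) set \<Rightarrow> nat \<Rightarrow> ('f trm set list \<Rightarrow> 'f trm set)
    \<Rightarrow> (nat \<Rightarrow> 'f trm set) \<Rightarrow> 'f trm set" where
  "top_ext ar T n f = restrict (\<lambda>s. f (map s [1..<n+1])) (Omega ar T)"

definition seq_upd :: "(nat \<Rightarrow> 'x) \<Rightarrow> 'x list \<Rightarrow> nat \<Rightarrow> 'x" where
  "seq_upd s bs j = (if 1 \<le> j \<and> j \<le> length bs then bs ! (j - 1) else s j)"

text \<open>(Clo F_V)^top with the operations of the full functional clone tau-algebra
  with value domain F_V.\<close>
definition Blk :: "('f \<Rightarrow> nat) \<Rightarrow> ('f trm \<times> 'f trm) set
    \<Rightarrow> ('f, (nat \<Rightarrow> 'f trm set) \<Rightarrow> 'f trm set) clone_alg" where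
  "Blk ar T = \<lparr> carrier = (\<lambda>(n, f). top_ext ar T n f) ` Clo ar T,
     ops = (\<lambda>f \<psi>s. restrict (\<lambda>s. FV_op T f (map (\<lambda>\<psi>. \<psi> s) \<psi>s)) (Omega ar T)),
     qop = (\<lambda>n \<phi> \<psi>s. restrict (\<lambda>s. \<phi> (seq_upd s (map (\<lambda>\<psi>. \<psi> s) \<psi>s))) (Omega ar T)),
     eop = (\<lambda>i. restrict (\<lambda>s. s i) (Omega ar T)) \<rparr>"

end

theory Submission
  imports Defs
begin

text \<open>Cl(V) is the free algebra F_V, and q_n acts on it by substitution: every assignment
  \<sigma> of elements of F_V to the variables extends to the endomorphism [t] \<mapsto> [t[v_i := \<sigma> i]],
  and q_n(a, b_1, ..., b_n) is that endomorphism for v_i \<mapsto> b_i (i \<le> n), v_i \<mapsto> v_i (i > n),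
  applied to a. The axioms (C1)-(C6) become facts about composing substitutions.
  An element [t] is independent of e_m iff t = t[v_m := v_(m+1)] in T, so it depends only on
  variables occurring in t; independence of the top variable lets one rename it to v_1,
  which bounds the variables of some representative by the dimension. A congruence of Cl(V)
  is compatible with the q_n exactly when the induced relation on terms is closed under
  substitution, which gives the correspondence with equational theories containing T.
  Finally the element [t] of Cl(V) corresponds to the block s \<mapsto> [t[v_i := s i]], the top
  extension of the term operation of t.\<close>

lemma finite_vars: "finite (vars t)"
  by (induction t) auto

lemma vars_ge1_if_wf_trm: "wf_trm ar t \<Longrightarrow> i \<in> vars t \<Longrightarrow> 1 \<le> i"
  by (induction t) auto

lemma vars_subset_atLeastAtMost: "wf_trm ar t \<Longrightarrow> \<exists>k. vars t \<subseteq> {1..k}"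
  using finite_vars[of t] vars_ge1_if_wf_trm[of ar t]
  by (metis atLeastAtMost_iff finite_nat_set_iff_bounded_le subsetI)

lemma subst_cong: "(\<And>i. i \<in> vars t \<Longrightarrow> \<theta> i = \<theta>' i) \<Longrightarrow> subst \<theta> t = subst \<theta>' t"
  by (induction t) auto

lemma subst_Var: "subst Var t = t"
  by (induction t) (auto simp: map_idI)

lemma subst_subst: "subst \<sigma> (subst \<theta> t) = subst (subst \<sigma> \<circ> \<theta>) t"
  by (induction t) auto

lemma vars_subst: "vars (subst \<theta> t) = (\<Union>i\<in>vars t. vars (\<theta> i))"
  by (induction t) auto

lemma wf_trm_subst:
  "wf_trm ar t \<Longrightarrow> (\<And>i. 1 \<le> i \<Longrightarrow> wf_trm ar (\<theta> i)) \<Longrightarrow> wf_trm ar (subst \<theta> t)"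
  by (induction t) auto

lemma eq_theoryD:
  assumes "eq_theory ar E"
  shows eq_theory_wf: "(s, t) \<in> E \<Longrightarrow> wf_trm ar s \<and> wf_trm ar t"
    and eq_theory_refl: "wf_trm ar t \<Longrightarrow> (t, t) \<in> E"
    and eq_theory_sym: "(s, t) \<in> E \<Longrightarrow> (t, s) \<in> E"
    and eq_theory_trans: "(s, t) \<in> E \<Longrightarrow> (t, u) \<in> E \<Longrightarrow> (s, u) \<in> E"
    and eq_theory_Fn: "length ts = ar f \<Longrightarrow> list_all2 (\<lambda>t u. (t, u) \<in> E) ts us
      \<Longrightarrow> (Fn f ts, Fn f us) \<in> E"
    and eq_theory_subst: "(s, t) \<in> E \<Longrightarrow> (\<And>i. 1 \<le> i \<Longrightarrow> wf_trm ar (\<theta> i))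
      \<Longrightarrow> (subst \<theta> s, subst \<theta> t) \<in> E"
  using assms unfolding eq_theory_def wf_terms_def by blast+

lemma eq_theory_equiv: "eq_theory ar E \<Longrightarrow> equiv (wf_terms ar) E"
  unfolding eq_theory_def equiv_def refl_on_def sym_def trans_def by blast

lemma eq_theory_subst_cong:
  assumes E: "eq_theory ar E"
  shows "wf_trm ar t \<Longrightarrow> (\<And>i. i \<in> vars t \<Longrightarrow> (\<theta> i, \<theta>' i) \<in> E)
    \<Longrightarrow> (subst \<theta> t, subst \<theta>' t) \<in> E"
proof (induction t)
  case (Fn f ts)
  then have "list_all2 (\<lambda>t u. (t, u) \<in> E) (map (subst \<theta>) ts) (map (subst \<theta>') ts)"
    by (auto simp: list.rel_map intro!: list.rel_refl_strong)
  with Fn.prems show ?case using eq_theory_Fn[OF E] by simp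
qed simp

lemma nth_map_upt: "1 \<le> i \<Longrightarrow> i \<le> k \<Longrightarrow> map s [1..<k+1] ! (i - 1) = s i"
  by (simp del: upt_Suc)

lemma seq_upd_map_self: "seq_upd s (map s [1..<n+1]) = s"
  unfolding seq_upd_def fun_eq_iff by (auto simp del: upt_Suc)

lemma seq_upd_append_map_self:
  assumes "length ys = k" "k \<le> n"
  shows "seq_upd s (ys @ map s [k+1..<n+1]) = seq_upd s ys"
  using assms unfolding seq_upd_def fun_eq_iff by (auto simp: nth_append simp del: upt_Suc)

lemma seq_upd_seq_upd: "length bs = length cs \<Longrightarrow> seq_upd (seq_upd s bs) cs = seq_upd s cs"
  unfolding seq_upd_def by auto

lemma seq_upd_shift:
  assumes "1 \<le> m"
  shows "seq_upd s (map s ([1..<m] @ [m+1])) = s(m := s (Suc m))"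
  using assms unfolding seq_upd_def fun_eq_iff by (auto simp: nth_append simp del: upt_Suc)

section \<open>The free algebra and its endomorphisms\<close>

locale free_algebra =
  fixes ar :: "'f \<Rightarrow> nat" and T :: "('f trm \<times> 'f trm) set"
  assumes eq_theory: "eq_theory ar T"
begin

abbreviation cl :: "'f trm \<Rightarrow> 'f trm set" where
  "cl t \<equiv> T `` {t}"

lemmas T_wf = eq_theory_wf[OF eq_theory]
  and T_refl = eq_theory_refl[OF eq_theory]
  and T_sym = eq_theory_sym[OF eq_theory]
  and T_Fn = eq_theory_Fn[OF eq_theory]
  and T_subst = eq_theory_subst[OF eq_theory]
  and T_subst_cong = eq_theory_subst_cong[OF eq_theory]

lemma cl_in_FV: "wf_trm ar t \<Longrightarrow> cl t \<in> FV ar T"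
  unfolding FV_def by (rule quotientI) (simp add: wf_terms_def)

lemma cl_eq: "(s, t) \<in> T \<Longrightarrow> cl s = cl t"
  using equiv_class_eq[OF eq_theory_equiv[OF eq_theory]] .

lemma cl_eq_iff: "wf_trm ar s \<Longrightarrow> cl s = cl t \<longleftrightarrow> (s, t) \<in> T"
  using cl_eq T_refl T_sym by blast

lemma FV_var_eq_cl: "FV_var T = (\<lambda>i. cl (Var i))"
  unfolding FV_var_def ..

lemma FV_var_in_FV: "1 \<le> i \<Longrightarrow> FV_var T i \<in> FV ar T"
  unfolding FV_var_eq_cl by (rule cl_in_FV) simp

lemma FV_cases:
  assumes "w \<in> FV ar T"
  obtains t where "wf_trm ar t" "w = cl t"
  using assms unfolding FV_def wf_terms_def quotient_def by auto

lemma FV_member: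
  assumes "w \<in> FV ar T" "t \<in> w"
  shows "wf_trm ar t" "w = cl t"
  using assms by (auto elim!: FV_cases dest: T_wf cl_eq)

lemma rep_in: "w \<in> FV ar T \<Longrightarrow> rep w \<in> w"
  unfolding rep_def by (rule someI_ex) (auto elim!: FV_cases intro: T_refl)

lemma wf_rep: "w \<in> FV ar T \<Longrightarrow> wf_trm ar (rep w)"
  using FV_member rep_in by blast

lemma cl_rep: "w \<in> FV ar T \<Longrightarrow> cl (rep w) = w"
  using FV_member(2) rep_in by metis

lemma rep_cl: "wf_trm ar t \<Longrightarrow> (rep (cl t), t) \<in> T"
  using rep_in[OF cl_in_FV] T_sym by blast

lemma FV_op_eq: "FV_op T f ws = cl (Fn f (map rep ws))"
  unfolding FV_op_def ..

lemma FV_op_in_FV: "set ws \<subseteq> FV ar T \<Longrightarrow> length ws = ar f \<Longrightarrow> FV_op T f ws \<in> FV ar T"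
  unfolding FV_op_eq by (rule cl_in_FV) (auto intro: wf_rep)

lemma FV_op_cl:
  assumes "\<And>t. t \<in> set ts \<Longrightarrow> wf_trm ar t" "length ts = ar f"
  shows "FV_op T f (map cl ts) = cl (Fn f ts)"
  unfolding FV_op_eq using assms
  by (intro cl_eq T_Fn) (auto simp: list_all2_conv_all_nth rep_cl)

definition FV_assignment :: "(nat \<Rightarrow> 'f trm set) \<Rightarrow> bool" where
  "FV_assignment \<sigma> \<longleftrightarrow> (\<forall>i\<ge>1. \<sigma> i \<in> FV ar T)"

text \<open>Restricted to F_V, so that it is extensional as required by FV_endo.\<close>
definition FV_extend :: "(nat \<Rightarrow> 'f trm set) \<Rightarrow> 'f trm set \<Rightarrow> 'f trm set" where
  "FV_extend \<sigma> = restrict (\<lambda>w. cl (subst (rep \<circ> \<sigma>) (rep w))) (FV ar T)"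

lemma FV_assignment_FV_var: "FV_assignment (FV_var T)"
  unfolding FV_assignment_def using FV_var_in_FV by blast

lemma FV_assignment_seq_upd:
  "FV_assignment \<sigma> \<Longrightarrow> set bs \<subseteq> FV ar T \<Longrightarrow> FV_assignment (seq_upd \<sigma> bs)"
  unfolding FV_assignment_def seq_upd_def by auto

lemma FV_assignment_Omega: "s \<in> Omega ar T \<Longrightarrow> FV_assignment s"
  unfolding FV_assignment_def Omega_def by blast

lemma seq_upd_Omega: "s \<in> Omega ar T \<Longrightarrow> set bs \<subseteq> FV ar T \<Longrightarrow> seq_upd s bs \<in> Omega ar T"
  unfolding Omega_def seq_upd_def by auto

lemma wf_rep_assignment: "FV_assignment \<sigma> \<Longrightarrow> 1 \<le> i \<Longrightarrow> wf_trm ar ((rep \<circ> \<sigma>) i)"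
  unfolding FV_assignment_def by (simp add: wf_rep)

lemma FV_extend_cl:
  assumes \<sigma>: "FV_assignment \<sigma>" and t: "wf_trm ar t"
  shows "FV_extend \<sigma> (cl t) = cl (subst (rep \<circ> \<sigma>) t)"
proof -
  have "(subst (rep \<circ> \<sigma>) (rep (cl t)), subst (rep \<circ> \<sigma>) t) \<in> T"
    using T_subst[OF rep_cl[OF t] wf_rep_assignment[OF \<sigma>]] .
  then show ?thesis
    unfolding FV_extend_def using cl_in_FV[OF t] by (simp add: cl_eq)
qed

lemma FV_extend_cl_subst:
  assumes \<theta>: "\<And>i. 1 \<le> i \<Longrightarrow> wf_trm ar (\<theta> i)" and t: "wf_trm ar t"
  shows "FV_extend (\<lambda>i. cl (\<theta> i)) (cl t) = cl (subst \<theta> t)"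
proof -
  have "FV_assignment (\<lambda>i. cl (\<theta> i))"
    unfolding FV_assignment_def using \<theta> cl_in_FV by blast
  moreover have "(subst (rep \<circ> (\<lambda>i. cl (\<theta> i))) t, subst \<theta> t) \<in> T"
    using t by (rule T_subst_cong) (auto intro: rep_cl \<theta> dest: vars_ge1_if_wf_trm[OF t])
  ultimately show ?thesis
    using t by (simp add: FV_extend_cl cl_eq)
qed

lemma FV_extend_cong: "(\<And>i. 1 \<le> i \<Longrightarrow> \<sigma> i = \<tau> i) \<Longrightarrow> FV_extend \<sigma> = FV_extend \<tau>"
  unfolding FV_extend_def
  by (intro restrict_ext arg_cong[where f = cl] subst_cong) (auto dest: vars_ge1_if_wf_trm[OF wf_rep])

lemma FV_extend_cong_vars:
  assumes "FV_assignment \<sigma>" "FV_assignment \<tau>" "wf_trm ar t" "\<And>i. i \<in> vars t \<Longrightarrow> \<sigma> i = \<tau> i"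
  shows "FV_extend \<sigma> (cl t) = FV_extend \<tau> (cl t)"
  using assms by (simp add: FV_extend_cl cong: subst_cong)

lemma FV_extend_in_FV: "FV_assignment \<sigma> \<Longrightarrow> w \<in> FV ar T \<Longrightarrow> FV_extend \<sigma> w \<in> FV ar T"
  unfolding FV_extend_def by (auto intro!: cl_in_FV wf_trm_subst wf_rep wf_rep_assignment)

lemma FV_extend_FV_var: "FV_assignment \<sigma> \<Longrightarrow> 1 \<le> i \<Longrightarrow> FV_extend \<sigma> (FV_var T i) = \<sigma> i"
  by (simp add: FV_var_eq_cl FV_extend_cl FV_assignment_def cl_rep)

lemma FV_extend_FV_var_id: "w \<in> FV ar T \<Longrightarrow> FV_extend (FV_var T) w = w"
  using FV_extend_cl_subst[of Var] by (auto elim!: FV_cases simp: FV_var_eq_cl subst_Var)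

lemma FV_extend_FV_op:
  assumes \<sigma>: "FV_assignment \<sigma>" and ws: "set ws \<subseteq> FV ar T" "length ws = ar f"
  shows "FV_extend \<sigma> (FV_op T f ws) = FV_op T f (map (FV_extend \<sigma>) ws)"
proof -
  let ?\<theta> = "rep \<circ> \<sigma>"
  have wf: "\<And>w. w \<in> set ws \<Longrightarrow> wf_trm ar (subst ?\<theta> (rep w))"
    using ws by (auto intro!: wf_trm_subst wf_rep wf_rep_assignment[OF \<sigma>])
  have "FV_extend \<sigma> (FV_op T f ws) = cl (Fn f (map (subst ?\<theta> \<circ> rep) ws))"
    unfolding FV_op_eq using ws by (subst FV_extend_cl[OF \<sigma>]) (auto intro: wf_rep)
  also have "\<dots> = FV_op T f (map cl (map (subst ?\<theta> \<circ> rep) ws))"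
    using ws wf by (intro FV_op_cl[symmetric]) auto
  also have "map cl (map (subst ?\<theta> \<circ> rep) ws) = map (FV_extend \<sigma>) ws"
    using ws unfolding FV_extend_def by auto
  finally show ?thesis .
qed

lemma FV_endo_FV_extend: "FV_assignment \<sigma> \<Longrightarrow> FV_endo ar T (FV_extend \<sigma>)"
  unfolding FV_endo_def using FV_extend_in_FV FV_extend_FV_op
  by (auto simp: FV_extend_def)

lemma FV_endo_unique:
  assumes s: "FV_endo ar T s" and \<sigma>: "FV_assignment \<sigma>"
    and gen: "\<And>i. 1 \<le> i \<Longrightarrow> s (FV_var T i) = \<sigma> i"
  shows "s = FV_extend \<sigma>"
proof
  have hom: "\<And>f ws. set ws \<subseteq> FV ar T \<Longrightarrow> length ws = ar f \<Longrightarrow>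
      s (FV_op T f ws) = FV_op T f (map s ws)"
    using s unfolding FV_endo_def by blast
  have on_cl: "s (cl t) = FV_extend \<sigma> (cl t)" if "wf_trm ar t" for t
    using that
  proof (induction t)
    case (Var i)
    then show ?case using gen FV_extend_FV_var[OF \<sigma>] by (simp add: FV_var_eq_cl)
  next
    case (Fn f ts)
    then have ts: "\<And>t. t \<in> set ts \<Longrightarrow> wf_trm ar t" "length ts = ar f" and
      cls: "set (map cl ts) \<subseteq> FV ar T" by (auto intro: cl_in_FV)
    have "s (cl (Fn f ts)) = FV_op T f (map s (map cl ts))"
      using hom[OF cls] ts by (simp add: FV_op_cl[OF ts, symmetric])
    also have "\<dots> = FV_op T f (map (FV_extend \<sigma>) (map cl ts))"
      using Fn.IH ts by (auto intro!: arg_cong[where f = "FV_op T f"])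
    also have "\<dots> = FV_extend \<sigma> (FV_op T f (map cl ts))"
      using FV_extend_FV_op[OF \<sigma> cls] ts by simp
    also have "\<dots> = FV_extend \<sigma> (cl (Fn f ts))"
      using FV_op_cl[OF ts] by simp
    finally show ?case .
  qed
  show "s w = FV_extend \<sigma> w" for w
  proof (cases "w \<in> FV ar T")
    case True
    then show ?thesis by (metis FV_cases on_cl)
  next
    case False
    then show ?thesis using s unfolding FV_endo_def FV_extend_def by auto
  qed
qed

lemma FV_extend_comp:
  assumes \<sigma>: "FV_assignment \<sigma>" and \<tau>: "FV_assignment \<tau>" and w: "w \<in> FV ar T"
  shows "FV_extend \<sigma> (FV_extend \<tau> w) = FV_extend (FV_extend \<sigma> \<circ> \<tau>) w"
proof -
  obtain t where t: "wf_trm ar t" "w = cl t" using w by (rule FV_cases)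
  define \<theta> where "\<theta> = (\<lambda>i. subst (rep \<circ> \<sigma>) (rep (\<tau> i)))"
  have \<theta>: "wf_trm ar (\<theta> i)" if "1 \<le> i" for i
    unfolding \<theta>_def using wf_rep_assignment[OF \<tau> that]
    by (auto intro!: wf_trm_subst wf_rep_assignment[OF \<sigma>])
  have "FV_extend \<sigma> (FV_extend \<tau> w) = cl (subst \<theta> t)"
    using t wf_rep_assignment[OF \<tau>]
    by (simp add: FV_extend_cl[OF \<tau>] FV_extend_cl[OF \<sigma>] wf_trm_subst subst_subst \<theta>_def comp_def)
  also have "\<dots> = FV_extend (\<lambda>i. cl (\<theta> i)) w"
    using FV_extend_cl_subst[OF \<theta> t(1)] t(2) by simp
  also have "FV_extend (\<lambda>i. cl (\<theta> i)) = FV_extend (FV_extend \<sigma> \<circ> \<tau>)"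
    using \<tau> unfolding \<theta>_def FV_assignment_def by (intro FV_extend_cong) (simp add: FV_extend_def)
  finally show ?thesis .
qed

lemma FV_q_eq_FV_extend:
  assumes bs: "set bs \<subseteq> FV ar T" "length bs = n"
  shows "FV_q ar T n a bs = FV_extend (seq_upd (FV_var T) bs) a"
proof -
  let ?\<sigma> = "seq_upd (FV_var T) bs"
  have \<sigma>: "FV_assignment ?\<sigma>"
    using FV_assignment_seq_upd[OF FV_assignment_FV_var bs(1)] .
  have gen: "(\<forall>i. 1 \<le> i \<longrightarrow> i \<le> n \<longrightarrow> s (FV_var T i) = bs ! (i - 1)) \<and>
      (\<forall>i. n < i \<longrightarrow> s (FV_var T i) = FV_var T i) \<longleftrightarrow>
      (\<forall>i\<ge>1. s (FV_var T i) = ?\<sigma> i)" for s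
    using bs(2) unfolding seq_upd_def by (auto simp: not_le)
  show ?thesis
    unfolding FV_q_def gen
    by (rule fun_cong[OF the_equality])
      (use FV_endo_FV_extend[OF \<sigma>] FV_extend_FV_var[OF \<sigma>] FV_endo_unique[OF _ \<sigma>] in blast)+
qed

lemma FV_extend_seq_upd:
  assumes \<sigma>: "FV_assignment \<sigma>" and ys: "set ys \<subseteq> FV ar T" and x: "x \<in> FV ar T"
  shows "FV_extend \<sigma> (FV_extend (seq_upd (FV_var T) ys) x)
    = FV_extend (seq_upd \<sigma> (map (FV_extend \<sigma>) ys)) x"
proof -
  have "FV_extend (FV_extend \<sigma> \<circ> seq_upd (FV_var T) ys)
      = FV_extend (seq_upd \<sigma> (map (FV_extend \<sigma>) ys))"
    using FV_extend_FV_var[OF \<sigma>] by (intro FV_extend_cong) (auto simp: seq_upd_def)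
  then show ?thesis
    using FV_extend_comp[OF \<sigma> FV_assignment_seq_upd[OF FV_assignment_FV_var ys] x] by simp
qed

lemma FV_q_cl_subst:
  assumes \<theta>: "\<And>i. 1 \<le> i \<Longrightarrow> wf_trm ar (\<theta> i)" and u: "wf_trm ar u" "vars u \<subseteq> {1..n}"
  shows "FV_q ar T n (cl u) (map (\<lambda>i. cl (\<theta> i)) [1..<n+1]) = cl (subst \<theta> u)"
proof -
  let ?bs = "map (\<lambda>i. cl (\<theta> i)) [1..<n+1]"
  have bs: "set ?bs \<subseteq> FV ar T" "length ?bs = n"
    using \<theta> by (auto intro: cl_in_FV)
  have \<sigma>: "FV_assignment (seq_upd (FV_var T) ?bs)"
    using FV_assignment_seq_upd[OF FV_assignment_FV_var bs(1)] .
  have \<tau>: "FV_assignment (\<lambda>i. cl (\<theta> i))"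
    unfolding FV_assignment_def using \<theta> cl_in_FV by blast
  have "seq_upd (FV_var T) ?bs i = cl (\<theta> i)" if "i \<in> vars u" for i
    using that u(2) unfolding seq_upd_def by (auto simp del: upt_Suc)
  then have "FV_q ar T n (cl u) ?bs = FV_extend (\<lambda>i. cl (\<theta> i)) (cl u)"
    unfolding FV_q_eq_FV_extend[OF bs] by (rule FV_extend_cong_vars[OF \<sigma> \<tau> u(1)])
  then show ?thesis
    using FV_extend_cl_subst[OF \<theta> u(1)] by simp
qed

section \<open>Cl(V) is a finite dimensional clone algebra\<close>

lemma FV_q_append_FV_var:
  assumes k: "k \<le> n" and ys: "set ys \<subseteq> FV ar T" "length ys = k"
  shows "FV_q ar T k x ys = FV_q ar T n x (ys @ map (FV_var T) [k+1..<n+1])"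
proof -
  let ?zs = "ys @ map (FV_var T) [k+1..<n+1]"
  have zs: "set ?zs \<subseteq> FV ar T" "length ?zs = n"
    using ys k by (auto simp: FV_var_in_FV)
  have "FV_q ar T k x ys = FV_extend (seq_upd (FV_var T) ys) x"
    using ys by (rule FV_q_eq_FV_extend)
  also have "seq_upd (FV_var T) ys = seq_upd (FV_var T) ?zs"
    using ys k by (intro seq_upd_append_map_self[symmetric]) auto
  also have "FV_extend (seq_upd (FV_var T) ?zs) x = FV_q ar T n x ?zs"
    using zs by (rule FV_q_eq_FV_extend[symmetric])
  finally show ?thesis .
qed

lemma FV_q_FV_q:
  assumes x: "x \<in> FV ar T" and ys: "set ys \<subseteq> FV ar T" "length ys = n"
    and zs: "set zs \<subseteq> FV ar T" "length zs = n"
  shows "FV_q ar T n (FV_q ar T n x ys) zs = FV_q ar T n x (map (\<lambda>y. FV_q ar T n y zs) ys)"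
proof -
  have zs': "FV_assignment (seq_upd (FV_var T) zs)"
    by (rule FV_assignment_seq_upd[OF FV_assignment_FV_var zs(1)])
  have "set (map (\<lambda>y. FV_q ar T n y zs) ys) \<subseteq> FV ar T"
    using ys zs' FV_extend_in_FV by (auto simp: FV_q_eq_FV_extend[OF zs])
  with FV_extend_seq_upd[OF zs' ys(1) x] x ys zs show ?thesis
    by (simp add: FV_q_eq_FV_extend seq_upd_seq_upd cong: map_cong)
qed

lemma ClV_simps:
  "carrier (ClV ar T) = FV ar T" "ops (ClV ar T) = FV_op T"
  "qop (ClV ar T) = FV_q ar T" "eop (ClV ar T) = FV_var T"
  unfolding ClV_def by simp_all

lemma clone_algebra_ClV: "clone_algebra ar (ClV ar T)"
  unfolding clone_algebra_def Let_def ClV_simps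
proof (intro conjI allI impI)
  fix n x ys
  assume "x \<in> FV ar T" "set ys \<subseteq> FV ar T" "length ys = n"
  then show "FV_q ar T n x ys \<in> FV ar T"
    by (simp add: FV_q_eq_FV_extend FV_extend_in_FV FV_assignment_seq_upd FV_assignment_FV_var)
next
  fix n i xs
  assume "1 \<le> i" "i \<le> n" "set xs \<subseteq> FV ar T" "length xs = n"
  then show "FV_q ar T n (FV_var T i) xs = xs ! (i - 1)"
    by (simp add: FV_q_eq_FV_extend FV_extend_FV_var FV_assignment_seq_upd FV_assignment_FV_var
        seq_upd_def)
next
  fix n j xs
  assume "n < j" "set xs \<subseteq> FV ar T" "length xs = n"
  then show "FV_q ar T n (FV_var T j) xs = FV_var T j"
    by (simp add: FV_q_eq_FV_extend FV_extend_FV_var FV_assignment_seq_upd FV_assignment_FV_var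
        seq_upd_def)
next
  fix n x
  assume x: "x \<in> FV ar T"
  have "set (map (FV_var T) [1..<n+1]) \<subseteq> FV ar T" "length (map (FV_var T) [1..<n+1]) = n"
    by (auto simp: FV_var_in_FV)
  then show "FV_q ar T n x (map (FV_var T) [1..<n+1]) = x"
    by (simp only: FV_q_eq_FV_extend seq_upd_map_self FV_extend_FV_var_id[OF x])
next
  fix n k x ys
  assume "k < n" "x \<in> FV ar T" "set ys \<subseteq> FV ar T" "length ys = k"
  then show "FV_q ar T k x ys = FV_q ar T n x (ys @ map (FV_var T) [k+1..<n+1])"
    by (intro FV_q_append_FV_var) auto
next
  fix n x ys zs
  assume "x \<in> FV ar T" "set ys \<subseteq> FV ar T" "set zs \<subseteq> FV ar T" "length ys = n" "length zs = n"
  then show "FV_q ar T n (FV_q ar T n x ys) zs = FV_q ar T n x (map (\<lambda>y. FV_q ar T n y zs) ys)"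
    by (intro FV_q_FV_q) auto
next
  fix n f xs ys
  assume "set xs \<subseteq> FV ar T" "length xs = ar f" "set ys \<subseteq> FV ar T" "length ys = n"
  then show "FV_q ar T n (FV_op T f xs) ys = FV_op T f (map (\<lambda>x. FV_q ar T n x ys) xs)"
    by (simp add: FV_q_eq_FV_extend FV_extend_FV_op FV_assignment_seq_upd FV_assignment_FV_var)
qed (simp_all add: FV_var_in_FV FV_op_in_FV)

lemma indep_iff:
  assumes w: "w \<in> FV ar T" and t: "t \<in> w" and m: "1 \<le> m"
  shows "indep (ClV ar T) w m \<longleftrightarrow> (t, subst (Var(m := Var (Suc m))) t) \<in> T"
proof -
  let ?\<rho> = "Var(m := Var (Suc m))" and ?bs = "map (FV_var T) ([1..<m] @ [m+1])"
  have wt: "wf_trm ar t" and w_cl: "w = cl t" using FV_member[OF w t] by auto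
  have bs: "set ?bs \<subseteq> FV ar T" "length ?bs = m"
    using m by (auto simp: FV_var_in_FV)
  have \<sigma>: "seq_upd (FV_var T) ?bs = (\<lambda>i. cl (?\<rho> i))"
    unfolding seq_upd_shift[OF m] by (auto simp: FV_var_eq_cl fun_eq_iff)
  have "FV_q ar T m w ?bs = FV_extend (\<lambda>i. cl (?\<rho> i)) (cl t)"
    by (simp only: FV_q_eq_FV_extend[OF bs] \<sigma> w_cl)
  also have "\<dots> = cl (subst ?\<rho> t)"
    by (rule FV_extend_cl_subst[OF _ wt]) simp
  finally have "indep (ClV ar T) w m \<longleftrightarrow> cl (subst ?\<rho> t) = cl t"
    unfolding indep_def ClV_simps w_cl by simp
  also have "\<dots> \<longleftrightarrow> (t, subst ?\<rho> t) \<in> T"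
    using cl_eq_iff[OF wt] by auto
  finally show ?thesis .
qed

lemma indep_if_notin_vars:
  assumes "w \<in> FV ar T" "t \<in> w" "1 \<le> m" "m \<notin> vars t"
  shows "indep (ClV ar T) w m"
proof -
  have "subst (Var(m := Var (Suc m))) t = subst Var t"
    using assms(4) by (intro subst_cong) auto
  then show ?thesis
    using assms FV_member T_refl by (simp add: indep_iff subst_Var)
qed

lemma finite_dimensional_ClV: "finite_dimensional (ClV ar T)"
  unfolding finite_dimensional_def ClV_simps
proof
  fix w
  assume w: "w \<in> FV ar T"
  have "{n. 1 \<le> n \<and> \<not> indep (ClV ar T) w n} \<subseteq> vars (rep w)"
    using indep_if_notin_vars[OF w rep_in[OF w]] by blast
  then show "finite {n. 1 \<le> n \<and> \<not> indep (ClV ar T) w n}"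
    using finite_vars finite_subset by blast
qed

lemma indep_drop_var:
  assumes w: "w \<in> FV ar T" and t: "t \<in> w" and vt: "vars t \<subseteq> {1..Suc k}" and k: "1 \<le> k"
    and indep: "indep (ClV ar T) w (Suc k)"
  shows "\<exists>t'\<in>w. vars t' \<subseteq> {1..k}"
proof -
  let ?shift = "Var(Suc k := Var (Suc (Suc k)))" and ?back = "Var(Suc (Suc k) := Var 1)"
  have "(t, subst ?shift t) \<in> T"
    using indep_iff[OF w t] indep by simp
  \<comment> \<open>renaming the fresh variable k + 2 to 1 turns t[k+1 := k+2] into t[k+1 := 1]\<close>
  then have "(subst ?back t, subst ?back (subst ?shift t)) \<in> T"
    by (rule T_subst) simp
  moreover have "subst ?back t = subst Var t"
    using vt by (intro subst_cong) auto
  moreover have "subst ?back (subst ?shift t) = subst (Var(Suc k := Var 1)) t"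
    unfolding subst_subst using vt by (intro subst_cong) auto
  ultimately have "subst (Var(Suc k := Var 1)) t \<in> w"
    using FV_member[OF w t] by (simp add: subst_Var)
  moreover have "vars (subst (Var(Suc k := Var 1)) t) \<subseteq> {1..k}"
    unfolding vars_subst using vt k by (auto split: if_splits)
  ultimately show ?thesis by blast
qed

lemma exists_term_vars_le:
  assumes w: "w \<in> FV ar T" and n: "1 \<le> n" and indep: "\<And>m. n < m \<Longrightarrow> indep (ClV ar T) w m"
  shows "\<exists>t\<in>w. vars t \<subseteq> {1..n}"
proof -
  have "\<exists>t\<in>w. vars t \<subseteq> {1..n}" if "t \<in> w" "vars t \<subseteq> {1..n + j}" for t j
    using that
  proof (induction j arbitrary: t)
    case (Suc j)
    have "vars t \<subseteq> {1..Suc (n + j)}" "1 \<le> n + j" "indep (ClV ar T) w (Suc (n + j))"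
      using Suc.prems(2) n indep by simp_all
    then obtain t' where "t' \<in> w" "vars t' \<subseteq> {1..n + j}"
      using indep_drop_var[OF w Suc.prems(1)] by blast
    then show ?case by (rule Suc.IH)
  qed auto
  moreover obtain k where "vars (rep w) \<subseteq> {1..k}"
    using vars_subset_atLeastAtMost[OF wf_rep[OF w]] ..
  then have "vars (rep w) \<subseteq> {1..n + k}" by auto
  ultimately show ?thesis using rep_in[OF w] by blast
qed

lemma has_dim_pos_term:
  assumes "w \<in> FV ar T" "n > 0" "has_dim (ClV ar T) w n"
  shows "\<exists>t\<in>w. vars t \<subseteq> {1..n}"
  using assms by (intro exists_term_vars_le) (auto simp: has_dim_def)

lemma has_dim_0_term:
  assumes w: "w \<in> FV ar T" and "has_dim (ClV ar T) w 0"
  shows "\<exists>t\<in>w. vars t \<subseteq> {1} \<and> (t, subst (\<lambda>i. if i = 1 then Var 2 else Var i) t) \<in> T"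
proof -
  have indep: "\<And>m. 1 \<le> m \<Longrightarrow> indep (ClV ar T) w m"
    using assms(2) unfolding has_dim_def by simp
  then obtain t where t: "t \<in> w" "vars t \<subseteq> {1..1}"
    using exists_term_vars_le[OF w, of 1] by auto
  have "(t, subst (Var(1 := Var (Suc 1))) t) \<in> T"
    using indep_iff[OF w t(1)] indep by blast
  then have "(t, subst (\<lambda>i. if i = 1 then Var 2 else Var i) t) \<in> T"
    by (simp only: fun_upd_def Suc_1)
  moreover have "vars t \<subseteq> {1}"
    using t(2) by simp
  ultimately show ?thesis
    using t(1) by blast
qed

section \<open>Congruences of Cl(V) and equational theories\<close>

lemma Con_ClV_D:
  assumes "\<Theta> \<in> Con ar (ClV ar T)"
  shows "equiv (FV ar T) \<Theta>"
    and "length xs = ar f \<Longrightarrow> list_all2 (\<lambda>x y. (x, y) \<in> \<Theta>) xs ys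
      \<Longrightarrow> (FV_op T f xs, FV_op T f ys) \<in> \<Theta>"
    and "length xs = n \<Longrightarrow> (x, y) \<in> \<Theta> \<Longrightarrow> list_all2 (\<lambda>x y. (x, y) \<in> \<Theta>) xs ys
      \<Longrightarrow> (FV_q ar T n x xs, FV_q ar T n y ys) \<in> \<Theta>"
  using assms unfolding Con_def ClV_simps by blast+

definition theory_of_con :: "('f trm set \<times> 'f trm set) set \<Rightarrow> ('f trm \<times> 'f trm) set" where
  "theory_of_con \<Theta> = {(s, t). wf_trm ar s \<and> wf_trm ar t \<and> (cl s, cl t) \<in> \<Theta>}"

definition con_of_theory :: "('f trm \<times> 'f trm) set \<Rightarrow> ('f trm set \<times> 'f trm set) set" where
  "con_of_theory U = {(x, y). x \<in> FV ar T \<and> y \<in> FV ar T \<and> (rep x, rep y) \<in> U}"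

lemma Con_ClV_subst_closed:
  assumes \<Theta>: "\<Theta> \<in> Con ar (ClV ar T)" and \<theta>: "\<And>i. 1 \<le> i \<Longrightarrow> wf_trm ar (\<theta> i)"
    and s: "wf_trm ar s" and t: "wf_trm ar t" and st: "(cl s, cl t) \<in> \<Theta>"
  shows "(cl (subst \<theta> s), cl (subst \<theta> t)) \<in> \<Theta>"
proof -
  obtain ks kt where "vars s \<subseteq> {1..ks}" "vars t \<subseteq> {1..kt}"
    using vars_subset_atLeastAtMost s t by metis
  then have vars: "vars s \<subseteq> {1..ks + kt}" "vars t \<subseteq> {1..ks + kt}" by auto
  let ?bs = "map (\<lambda>i. cl (\<theta> i)) [1..<ks + kt + 1]"
  have "(x, x) \<in> \<Theta>" if "x \<in> set ?bs" for x
    using that \<theta> cl_in_FV Con_ClV_D(1)[OF \<Theta>] unfolding equiv_def refl_on_def by auto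
  then have "list_all2 (\<lambda>x y. (x, y) \<in> \<Theta>) ?bs ?bs"
    by (rule list.rel_refl_strong)
  then have "(FV_q ar T (ks + kt) (cl s) ?bs, FV_q ar T (ks + kt) (cl t) ?bs) \<in> \<Theta>"
    using Con_ClV_D(3)[OF \<Theta> _ st] by (simp del: upt_Suc)
  then show ?thesis
    using FV_q_cl_subst[OF \<theta>] s t vars by (simp del: upt_Suc)
qed

lemma theory_of_con_in_LT:
  assumes \<Theta>: "\<Theta> \<in> Con ar (ClV ar T)"
  shows "theory_of_con \<Theta> \<in> LT ar T"
proof -
  note eqv = Con_ClV_D(1)[OF \<Theta>]
  have refl: "(x, x) \<in> \<Theta>" if "x \<in> FV ar T" for x
    using eqv that unfolding equiv_def refl_on_def by blast
  have "eq_theory ar (theory_of_con \<Theta>)"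
    unfolding eq_theory_def
  proof (intro conjI allI impI ballI)
    fix f ts us
    assume l: "length ts = ar f" and rel: "list_all2 (\<lambda>t u. (t, u) \<in> theory_of_con \<Theta>) ts us"
    then have "list_all2 (\<lambda>x y. (x, y) \<in> \<Theta>) (map cl ts) (map cl us)"
      unfolding theory_of_con_def by (auto simp: list.rel_map elim: list.rel_mono_strong)
    then have "(FV_op T f (map cl ts), FV_op T f (map cl us)) \<in> \<Theta>"
      using Con_ClV_D(2)[OF \<Theta>] l by simp
    moreover have "\<And>t. t \<in> set ts \<Longrightarrow> wf_trm ar t" "\<And>u. u \<in> set us \<Longrightarrow> wf_trm ar u"
      "length us = ar f"
      using l rel unfolding theory_of_con_def list_all2_conv_all_nth by (auto simp: in_set_conv_nth)
    ultimately show "(Fn f ts, Fn f us) \<in> theory_of_con \<Theta>"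
      using l unfolding theory_of_con_def by (simp add: FV_op_cl)
  next
    fix s t and \<theta> :: "nat \<Rightarrow> 'f trm"
    assume "(s, t) \<in> theory_of_con \<Theta>" "\<forall>i\<ge>1. wf_trm ar (\<theta> i)"
    then show "(subst \<theta> s, subst \<theta> t) \<in> theory_of_con \<Theta>"
      using Con_ClV_subst_closed[OF \<Theta>] unfolding theory_of_con_def by (auto intro: wf_trm_subst)
  qed (use eqv in \<open>auto simp: theory_of_con_def wf_terms_def equiv_def refl_on_def sym_def
    intro: cl_in_FV elim: transE\<close>)
  moreover have "T \<subseteq> theory_of_con \<Theta>"
    unfolding theory_of_con_def using T_wf cl_eq refl cl_in_FV by fastforce
  ultimately show ?thesis
    unfolding LT_def by simp
qed

lemma LT_rep_cl_iff:
  assumes U: "U \<in> LT ar T" and s: "wf_trm ar s" and t: "wf_trm ar t"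
  shows "(rep (cl s), rep (cl t)) \<in> U \<longleftrightarrow> (s, t) \<in> U"
proof -
  have EU: "eq_theory ar U" and TU: "T \<subseteq> U" using U unfolding LT_def by auto
  have "(rep (cl s), s) \<in> U" "(rep (cl t), t) \<in> U"
    using rep_cl s t TU by auto
  then show ?thesis
    using eq_theory_trans[OF EU] eq_theory_sym[OF EU] by blast
qed

lemma con_of_theory_cl_iff:
  assumes U: "U \<in> LT ar T" and "wf_trm ar s" "wf_trm ar t"
  shows "(cl s, cl t) \<in> con_of_theory U \<longleftrightarrow> (s, t) \<in> U"
  using assms cl_in_FV LT_rep_cl_iff[OF U] unfolding con_of_theory_def by simp

lemma list_all2_con_of_theoryD:
  assumes "list_all2 (\<lambda>x y. (x, y) \<in> con_of_theory U) xs ys"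
  shows "set xs \<subseteq> FV ar T" "set ys \<subseteq> FV ar T" "length ys = length xs"
  using assms unfolding con_of_theory_def list_all2_conv_all_nth by (auto simp: in_set_conv_nth)

lemma con_of_theory_FV_op:
  assumes U: "U \<in> LT ar T" and l: "length xs = ar f"
    and rel: "list_all2 (\<lambda>x y. (x, y) \<in> con_of_theory U) xs ys"
  shows "(FV_op T f xs, FV_op T f ys) \<in> con_of_theory U"
proof -
  have EU: "eq_theory ar U" using U unfolding LT_def by auto
  have "list_all2 (\<lambda>s t. (s, t) \<in> U) (map rep xs) (map rep ys)"
    using rel unfolding con_of_theory_def by (auto simp: list.rel_map elim: list.rel_mono_strong)
  then show ?thesis
    using list_all2_con_of_theoryD[OF rel] l eq_theory_Fn[OF EU] con_of_theory_cl_iff[OF U]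
    by (simp add: FV_op_eq wf_rep subset_iff)
qed

lemma con_of_theory_FV_q:
  assumes U: "U \<in> LT ar T" and l: "length xs = n" and xy: "(x, y) \<in> con_of_theory U"
    and rel: "list_all2 (\<lambda>x y. (x, y) \<in> con_of_theory U) xs ys"
  shows "(FV_q ar T n x xs, FV_q ar T n y ys) \<in> con_of_theory U"
proof -
  have EU: "eq_theory ar U" using U unfolding LT_def by auto
  note xs = list_all2_con_of_theoryD[OF rel]
  let ?\<sigma> = "seq_upd (FV_var T) xs" and ?\<tau> = "seq_upd (FV_var T) ys"
  have \<sigma>: "FV_assignment ?\<sigma>" and \<tau>: "FV_assignment ?\<tau>"
    using xs by (simp_all add: FV_assignment_seq_upd FV_assignment_FV_var)
  have x: "x \<in> FV ar T" and y: "y \<in> FV ar T" and "(rep x, rep y) \<in> U"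
    using xy unfolding con_of_theory_def by auto
  then have "(subst (rep \<circ> ?\<sigma>) (rep x), subst (rep \<circ> ?\<sigma>) (rep y)) \<in> U"
    using eq_theory_subst[OF EU] wf_rep_assignment[OF \<sigma>] by blast
  moreover have "((rep \<circ> ?\<sigma>) i, (rep \<circ> ?\<tau>) i) \<in> U" if "1 \<le> i" for i
  proof (cases "i \<le> n")
    case True
    then show ?thesis
      using rel l that unfolding seq_upd_def con_of_theory_def list_all2_conv_all_nth by auto
  next
    case False
    then show ?thesis
      using l xs(3) that eq_theory_refl[OF EU] wf_rep FV_var_in_FV unfolding seq_upd_def by auto
  qed
  then have "(subst (rep \<circ> ?\<sigma>) (rep y), subst (rep \<circ> ?\<tau>) (rep y)) \<in> U"
    using wf_rep[OF y] vars_ge1_if_wf_trm by (intro eq_theory_subst_cong[OF EU]) auto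
  ultimately have "(subst (rep \<circ> ?\<sigma>) (rep x), subst (rep \<circ> ?\<tau>) (rep y)) \<in> U"
    using eq_theory_trans[OF EU] by blast
  then show ?thesis
    using x y l xs con_of_theory_cl_iff[OF U] wf_rep_assignment[OF \<sigma>] wf_rep_assignment[OF \<tau>] wf_rep
    by (simp add: FV_q_eq_FV_extend FV_extend_def wf_trm_subst)
qed

lemma con_of_theory_in_Con:
  assumes U: "U \<in> LT ar T"
  shows "con_of_theory U \<in> Con ar (ClV ar T)"
proof -
  have EU: "eq_theory ar U" using U unfolding LT_def by auto
  have "equiv (FV ar T) (con_of_theory U)"
    unfolding equiv_def refl_on_def sym_def trans_def con_of_theory_def
    using eq_theory_refl[OF EU] eq_theory_sym[OF EU] eq_theory_trans[OF EU] wf_rep by blast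
  then show ?thesis
    unfolding Con_def ClV_simps using con_of_theory_FV_op[OF U] con_of_theory_FV_q[OF U] by blast
qed

lemma con_of_theory_of_con:
  assumes "\<Theta> \<in> Con ar (ClV ar T)"
  shows "con_of_theory (theory_of_con \<Theta>) = \<Theta>"
proof -
  have "\<Theta> \<subseteq> FV ar T \<times> FV ar T"
    using Con_ClV_D(1)[OF assms] unfolding equiv_def refl_on_def by blast
  then show ?thesis
    unfolding con_of_theory_def theory_of_con_def by (auto simp: cl_rep wf_rep)
qed

lemma theory_of_con_of_theory:
  assumes U: "U \<in> LT ar T"
  shows "theory_of_con (con_of_theory U) = U"
  using LT_rep_cl_iff[OF U] eq_theory_wf U cl_in_FV
  unfolding theory_of_con_def con_of_theory_def LT_def by fastforce

lemma Con_ClV_order_iso_LT: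
  "bij_betw theory_of_con (Con ar (ClV ar T)) (LT ar T)"
  "\<Theta>1 \<in> Con ar (ClV ar T) \<Longrightarrow> \<Theta>2 \<in> Con ar (ClV ar T) \<Longrightarrow>
    \<Theta>1 \<subseteq> \<Theta>2 \<longleftrightarrow> theory_of_con \<Theta>1 \<subseteq> theory_of_con \<Theta>2"
proof -
  show "bij_betw theory_of_con (Con ar (ClV ar T)) (LT ar T)"
    by (rule bij_betw_byWitness[where f' = con_of_theory])
      (auto simp: con_of_theory_of_con theory_of_con_of_theory theory_of_con_in_LT
        con_of_theory_in_Con)
  have "mono theory_of_con" "mono con_of_theory"
    unfolding theory_of_con_def con_of_theory_def by (auto intro!: monoI)
  then show "\<Theta>1 \<in> Con ar (ClV ar T) \<Longrightarrow> \<Theta>2 \<in> Con ar (ClV ar T) \<Longrightarrow>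
    \<Theta>1 \<subseteq> \<Theta>2 \<longleftrightarrow> theory_of_con \<Theta>1 \<subseteq> theory_of_con \<Theta>2"
    by (metis con_of_theory_of_con monoD)
qed

section \<open>The block algebra\<close>

definition to_block :: "'f trm set \<Rightarrow> (nat \<Rightarrow> 'f trm set) \<Rightarrow> 'f trm set" where
  "to_block w = restrict (\<lambda>s. FV_extend s w) (Omega ar T)"

lemma term_op_eq_FV_extend:
  assumes \<sigma>: "FV_assignment \<sigma>" and "wf_trm ar t" and "\<And>i. i \<in> vars t \<Longrightarrow> xs ! (i - 1) = \<sigma> i"
  shows "term_op T t xs = FV_extend \<sigma> (cl t)"
  using assms(2,3)
proof (induction t)
  case (Var i)
  then show ?case using FV_extend_FV_var[OF \<sigma>] by (simp add: FV_var_eq_cl)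
next
  case (Fn f ts)
  then have ts: "\<And>t. t \<in> set ts \<Longrightarrow> wf_trm ar t" "length ts = ar f"
    and cls: "set (map cl ts) \<subseteq> FV ar T" by (auto intro: cl_in_FV)
  have "term_op T u xs = FV_extend \<sigma> (cl u)" if "u \<in> set ts" for u
    using that Fn.prems by (intro Fn.IH) auto
  then have "term_op T (Fn f ts) xs = FV_op T f (map (FV_extend \<sigma>) (map cl ts))"
    by (simp cong: map_cong)
  also have "\<dots> = FV_extend \<sigma> (FV_op T f (map cl ts))"
    using FV_extend_FV_op[OF \<sigma> cls] ts by simp
  also have "\<dots> = FV_extend \<sigma> (cl (Fn f ts))"
    using FV_op_cl[OF ts] by simp
  finally show ?case .
qed

lemma top_ext_term_op:
  assumes t: "wf_trm ar t" and vt: "vars t \<subseteq> {1..k}"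
  shows "top_ext ar T k (term_op T t) = to_block (cl t)"
proof
  fix s :: "nat \<Rightarrow> 'f trm set"
  have nth: "map s [1..<k+1] ! (i - 1) = s i" if "i \<in> vars t" for i
    using that vt by (intro nth_map_upt) auto
  have "term_op T t (map s [1..<k+1]) = FV_extend s (cl t)" if "s \<in> Omega ar T"
    by (rule term_op_eq_FV_extend[OF FV_assignment_Omega[OF that] t nth])
  then show "top_ext ar T k (term_op T t) s = to_block (cl t) s"
    unfolding top_ext_def to_block_def by simp
qed

lemma inj_on_to_block: "inj_on to_block (FV ar T)"
proof (rule inj_onI)
  let ?s = "(FV_var T)(0 := undefined)"
  have s: "?s \<in> Omega ar T"
    unfolding Omega_def using FV_var_in_FV by simp
  have "to_block w ?s = w" if "w \<in> FV ar T" for w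
    using s that FV_extend_FV_var_id FV_extend_cong[of ?s "FV_var T"] by (simp add: to_block_def)
  then show "to_block w = to_block w' \<Longrightarrow> w \<in> FV ar T \<Longrightarrow> w' \<in> FV ar T \<Longrightarrow> w = w'" for w w'
    by metis
qed

lemma Blk_simps:
  "carrier (Blk ar T) = (\<lambda>(n, f). top_ext ar T n f) ` Clo ar T"
  "ops (Blk ar T) = (\<lambda>f \<psi>s. restrict (\<lambda>s. FV_op T f (map (\<lambda>\<psi>. \<psi> s) \<psi>s)) (Omega ar T))"
  "qop (Blk ar T) = (\<lambda>n \<phi> \<psi>s. restrict (\<lambda>s. \<phi> (seq_upd s (map (\<lambda>\<psi>. \<psi> s) \<psi>s))) (Omega ar T))"
  "eop (Blk ar T) = (\<lambda>i. restrict (\<lambda>s. s i) (Omega ar T))"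
  unfolding Blk_def by simp_all

lemma to_block_in_Blk:
  assumes w: "w \<in> FV ar T"
  shows "to_block w \<in> carrier (Blk ar T)"
proof -
  obtain k where vt: "vars (rep w) \<subseteq> {1..k}"
    using vars_subset_atLeastAtMost[OF wf_rep[OF w]] ..
  have "(k, term_op T (rep w)) \<in> term_ops ar T"
    unfolding term_ops_def using wf_rep[OF w] vt by blast
  then have "(k, \<lambda>xs. term_op T (rep w) (xs @ [])) \<in> Clo ar T"
    unfolding Clo_def
    by (intro CollectI exI[where x = k] exI[where x = k] exI[where x = "term_op T (rep w)"]
        exI[where x = "[]"]) auto
  moreover have "to_block w = top_ext ar T k (\<lambda>xs. term_op T (rep w) (xs @ []))"
    using top_ext_term_op[OF wf_rep[OF w] vt] cl_rep[OF w] by simp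
  ultimately show ?thesis
    unfolding Blk_simps by force
qed

lemma Blk_in_to_block:
  assumes "\<phi> \<in> carrier (Blk ar T)"
  shows "\<phi> \<in> to_block ` FV ar T"
proof -
  obtain m f where "(m, f) \<in> Clo ar T" "\<phi> = top_ext ar T m f"
    using assms unfolding Blk_simps by auto
  then obtain k g ys where \<phi>: "\<phi> = top_ext ar T m (\<lambda>xs. g (xs @ ys))"
    and g: "(k, g) \<in> term_ops ar T" and mk: "m \<le> k"
    and ys: "set ys \<subseteq> FV ar T" "length ys = k - m"
    and fictitious: "\<forall>xs zs zs'. set xs \<subseteq> FV ar T \<longrightarrow> length xs = m \<longrightarrow>
      set zs \<subseteq> FV ar T \<longrightarrow> length zs = k - m \<longrightarrow>
      set zs' \<subseteq> FV ar T \<longrightarrow> length zs' = k - m \<longrightarrow> g (xs @ zs) = g (xs @ zs')"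
    unfolding Clo_def by blast
  obtain t where t: "wf_trm ar t" and vt: "vars t \<subseteq> {1..k}" and g_eq: "g = term_op T t"
    using g unfolding term_ops_def by auto
  have "\<phi> s = to_block (cl t) s" for s
  proof (cases "s \<in> Omega ar T")
    case True
    then have s: "\<And>i. 1 \<le> i \<Longrightarrow> s i \<in> FV ar T"
      unfolding Omega_def by auto
    have split: "[1..<k+1] = [1..<m+1] @ [m+1..<k+1]"
      using upt_add_eq_append[of 1 "m + 1" "k - m"] mk by simp
    have "\<phi> s = g (map s [1..<m+1] @ ys)"
      using True unfolding \<phi> top_ext_def by simp
    also have "\<dots> = g (map s [1..<m+1] @ map s [m+1..<k+1])"
      using mk ys s by (intro fictitious[rule_format]) auto
    also have "\<dots> = top_ext ar T k g s"
      using True unfolding top_ext_def split by simp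
    finally show ?thesis
      using top_ext_term_op[OF t vt] g_eq by simp
  next
    case False
    then show ?thesis
      unfolding \<phi> top_ext_def to_block_def by simp
  qed
  then show ?thesis
    using cl_in_FV[OF t] by blast
qed

lemma to_block_FV_op:
  assumes "set xs \<subseteq> FV ar T" "length xs = ar f"
  shows "to_block (FV_op T f xs) = ops (Blk ar T) f (map to_block xs)"
  using assms unfolding Blk_simps to_block_def
  by (intro ext) (auto simp: FV_extend_FV_op FV_assignment_Omega subset_iff
      intro!: arg_cong[where f = "FV_op T f"])

lemma to_block_FV_q:
  assumes x: "x \<in> FV ar T" and ys: "set ys \<subseteq> FV ar T" "length ys = n"
  shows "to_block (FV_q ar T n x ys) = qop (Blk ar T) n (to_block x) (map to_block ys)"
proof
  fix s
  show "to_block (FV_q ar T n x ys) s = qop (Blk ar T) n (to_block x) (map to_block ys) s"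
  proof (cases "s \<in> Omega ar T")
    case True
    note s = FV_assignment_Omega[OF True]
    have "map (\<lambda>\<psi>. \<psi> s) (map to_block ys) = map (FV_extend s) ys"
      using True ys(1) unfolding to_block_def by auto
    moreover have "seq_upd s (map (FV_extend s) ys) \<in> Omega ar T"
      using True ys(1) FV_extend_in_FV[OF s] by (intro seq_upd_Omega) auto
    ultimately have "qop (Blk ar T) n (to_block x) (map to_block ys) s
        = FV_extend (seq_upd s (map (FV_extend s) ys)) x"
      using True unfolding Blk_simps by (simp add: to_block_def del: map_map)
    also have "\<dots> = FV_extend s (FV_q ar T n x ys)"
      using FV_extend_seq_upd[OF s ys(1) x] by (simp add: FV_q_eq_FV_extend[OF ys])
    finally show ?thesis
      using True by (simp add: to_block_def)
  qed (simp add: to_block_def Blk_simps)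
qed

lemma to_block_FV_var: "1 \<le> i \<Longrightarrow> to_block (FV_var T i) = eop (Blk ar T) i"
  unfolding Blk_simps to_block_def by (intro ext) (simp add: FV_extend_FV_var FV_assignment_Omega)

lemma clone_iso_to_block: "clone_iso ar (ClV ar T) (Blk ar T) to_block"
  unfolding clone_iso_def ClV_simps bij_betw_def
  using inj_on_to_block to_block_in_Blk Blk_in_to_block to_block_FV_op to_block_FV_q to_block_FV_var
  by blast

end

theorem proposition10p3:
  fixes ar :: "'f \<Rightarrow> nat" and T :: "('f trm \<times> 'f trm) set"
  assumes "eq_theory ar T"
  shows "(clone_algebra ar (ClV ar T) \<and> finite_dimensional (ClV ar T))
    \<and> (\<exists>h. bij_betw h (Con ar (ClV ar T)) (LT ar T) \<and>
          (\<forall>\<theta>1\<in>Con ar (ClV ar T). \<forall>\<theta>2\<in>Con ar (ClV ar T). \<theta>1 \<subseteq> \<theta>2 \<longleftrightarrow> h \<theta>1 \<subseteq> h \<theta>2))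
    \<and> (\<forall>w\<in>FV ar T. \<forall>n>0. has_dim (ClV ar T) w n \<longrightarrow> (\<exists>t\<in>w. vars t \<subseteq> {1..n}))
    \<and> (\<forall>w\<in>FV ar T. has_dim (ClV ar T) w 0 \<longrightarrow>
          (\<exists>t\<in>w. vars t \<subseteq> {1} \<and> (t, subst (\<lambda>i. if i = 1 then Var 2 else Var i) t) \<in> T))
    \<and> (\<exists>h. clone_iso ar (ClV ar T) (Blk ar T) h)"
proof -
  interpret free_algebra ar T
    using assms by (rule free_algebra.intro)
  have "\<exists>h. bij_betw h (Con ar (ClV ar T)) (LT ar T) \<and>
      (\<forall>\<theta>1\<in>Con ar (ClV ar T). \<forall>\<theta>2\<in>Con ar (ClV ar T). \<theta>1 \<subseteq> \<theta>2 \<longleftrightarrow> h \<theta>1 \<subseteq> h \<theta>2)"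
    using Con_ClV_order_iso_LT by blast
  then show ?thesis
    using clone_algebra_ClV finite_dimensional_ClV has_dim_pos_term has_dim_0_term
      clone_iso_to_block
    by blast
qed

end
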